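(* Let $\widetilde M_0(\varepsilon),\widetilde M_1(\varepsilon)$ be two families of diagonalizable linear operators on $\mathbb C^2$ depending on a parameter $\varepsilon>0$. Let $\widetilde\Lambda_i=\operatorname{diag}(\lambda_{i1},\lambda_{i2})$ be the matrix of $\widetilde M_i$ in its eigenbasis, $i=0,1$. Let $C(\varepsilon)$ be the transition matrix between the eigenbases, so that in the eigenbasis of $\widetilde M_0$ the matrix of $\widetilde M_1$ is $C(\varepsilon)\widetilde\Lambda_1C^{-1}(\varepsilon)$. Suppose the eigenbases converge to some bases as $\varepsilon\to0$, and that $C(\varepsilon)$ tends to a unipotent lower-triangular matrix $C_0$. Suppose $$\nu_0=\frac{\lambda_{02}}{\lambda_{01}}\to0,\qquad \nu_1=\frac{\lambda_{11}}{\lambda_{12}}\to0\quad(\varepsilon\to0),$$ and suppose the upper-triangular (i.e. $(1,2)$) entry $u(\varepsilon)$ of $C(\varepsilon)$ satisfies $u(\varepsilon)=o(\nu_0\nu_1)$ as $\varepsilon\to0$. Then the matrix of $\widetilde M_1^{-1}\widetilde M_0\widetilde M_1\widetilde M_0^{-1}$ in the eigenbasis of $\widetilde M_0$ converges to $C_0$ as $\varepsilon\to0$. *)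

theory Defs
  imports "HOL-Analysis.Analysis" "HOL-Library.Landau_Symbols"
begin

text \<open>2x2 complex matrices are \<open>complex^2^2\<close>; the index type 2 has the two
  elements 1 and 2, so \<open>A $ 1 $ 2\<close> is the (1,2) entry (row 1, column 2).\<close>

definition diag2 :: "complex \<Rightarrow> complex \<Rightarrow> complex^2^2" where
  "diag2 a b = (\<chi> i j. if i = j then (if i = 1 then a else b) else 0)"

definition unipotent_lower :: "complex^2^2 \<Rightarrow> bool" where
  "unipotent_lower A \<longleftrightarrow> A $ 1 $ 1 = 1 \<and> A $ 2 $ 2 = 1 \<and> A $ 1 $ 2 = 0"

end

theory Submission
  imports Defs
begin

(* In the eigenbasis of M0 the operator has matrix C L1^-1 C^-1 L0 C L1 C^-1 L0^-1, where
   L0, L1 are the diagonal eigenvalue matrices. As L0 and L1 commute, this is C Y K with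
   K = L0 C^-1 L0^-1 and Y = L1^-1 (C^-1 L0 C L0^-1) L1. Conjugation by a diagonal matrix only
   rescales the off-diagonal entries, so for C = [[p, u], [q, r]] the entries of Y and K are
   rational in p, q, r, nu0, nu1, u / nu0 and u / (nu0 nu1), with the determinant p r - u q as
   the only denominator. Since p, r -> 1 and nu0, nu1, u / (nu0 nu1) -> 0, both Y and K tend to
   the identity, hence C Y K -> C0. *)

lemma matrix_inv_right:
  assumes "invertible A" shows "A ** matrix_inv A = mat 1"
  using assms unfolding invertible_def matrix_inv_def by (rule someI2_ex) auto

lemma matrix_inv_left:
  assumes "invertible A" shows "matrix_inv A ** A = mat 1"
  using assms unfolding invertible_def matrix_inv_def by (rule someI2_ex) auto

lemma matrix_inv_unique:
  fixes A B :: "'a::field^'n^'n"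
  assumes "A ** B = mat 1" shows "matrix_inv A = B"
proof -
  have "invertible A"
    using assms matrix_left_right_inverse invertible_def by blast
  then have "matrix_inv A = matrix_inv A ** (A ** B)"
    using assms by simp
  also have "\<dots> = B"
    using matrix_inv_left[OF \<open>invertible A\<close>] by (simp add: matrix_mul_assoc)
  finally show ?thesis .
qed

lemma matrix_inv_mul_cancel:
  assumes "invertible A" shows "matrix_inv A ** (A ** X) = X"
  by (simp add: matrix_mul_assoc matrix_inv_left assms)

lemma matrix_mul_inv_cancel:
  assumes "invertible A" shows "A ** (matrix_inv A ** X) = X"
  by (simp add: matrix_mul_assoc matrix_inv_right assms)

lemma matrix_inv_conj:
  fixes P D :: "'a::field^'n^'n"
  assumes "invertible P" "invertible D"
  shows "matrix_inv (P ** D ** matrix_inv P) = P ** matrix_inv D ** matrix_inv P"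
  by (rule matrix_inv_unique)
     (simp add: matrix_mul_assoc[symmetric] matrix_inv_mul_cancel matrix_mul_inv_cancel
                matrix_inv_right assms)

lemma commutator_in_eigenbasis:
  fixes P0 P1 D0 D1 :: "'a::field^'n^'n"
  assumes "invertible P0" "invertible P1" "invertible D0" "invertible D1"
  defines "C \<equiv> matrix_inv P0 ** P1"
  shows "matrix_inv P0 ** (matrix_inv (P1 ** D1 ** matrix_inv P1) ** (P0 ** D0 ** matrix_inv P0)
           ** (P1 ** D1 ** matrix_inv P1) ** matrix_inv (P0 ** D0 ** matrix_inv P0)) ** P0
         = C ** matrix_inv D1 ** matrix_inv C ** D0 ** C ** D1 ** matrix_inv C ** matrix_inv D0"
proof -
  have inv_C: "matrix_inv C = matrix_inv P1 ** P0"
    unfolding C_def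
    by (intro matrix_inv_unique)
       (simp add: matrix_mul_assoc[symmetric] matrix_mul_inv_cancel matrix_inv_left assms)
  show ?thesis
    unfolding inv_C unfolding C_def matrix_inv_conj[OF assms(1,3)] matrix_inv_conj[OF assms(2,4)]
    by (simp add: matrix_mul_assoc[symmetric] matrix_inv_mul_cancel matrix_mul_inv_cancel
                  matrix_inv_left assms)
qed

lemma commutator_regroup:
  fixes C D0 D1 :: "'a::field^'n^'n"
  assumes "invertible D0" "D0 ** D1 = D1 ** D0"
  shows "C ** matrix_inv D1 ** matrix_inv C ** D0 ** C ** D1 ** matrix_inv C ** matrix_inv D0
       = C ** (matrix_inv D1 ** (matrix_inv C ** D0 ** C ** matrix_inv D0) ** D1)
           ** (D0 ** matrix_inv C ** matrix_inv D0)"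
proof -
  have commute: "matrix_inv D0 ** (D1 ** (D0 ** X)) = D1 ** X" for X
    using assms by (metis matrix_inv_mul_cancel matrix_mul_assoc)
  show ?thesis
    by (simp add: matrix_mul_assoc[symmetric] commute)
qed

lemma tendsto_matrix_mult [tendsto_intros]:
  fixes A :: "'b \<Rightarrow> 'a::real_normed_field^'n^'m" and B :: "'b \<Rightarrow> 'a^'p^'n"
  assumes "(A \<longlongrightarrow> A0) F" "(B \<longlongrightarrow> B0) F"
  shows "((\<lambda>x. A x ** B x) \<longlongrightarrow> A0 ** B0) F"
  using assms unfolding matrix_matrix_mult_def by (auto intro!: tendsto_intros)

definition mat2 :: "'a \<Rightarrow> 'a \<Rightarrow> 'a \<Rightarrow> 'a \<Rightarrow> 'a^2^2" where
  "mat2 a b c d = (\<chi> i j. if i = 1 then (if j = 1 then a else b) else (if j = 1 then c else d))"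

lemma mat2_nth [simp]:
  "mat2 a b c d $ 1 $ 1 = a" "mat2 a b c d $ 1 $ 2 = b"
  "mat2 a b c d $ 2 $ 1 = c" "mat2 a b c d $ 2 $ 2 = d"
  by (simp_all add: mat2_def)

lemma mat2_entries: "A = mat2 (A $ 1 $ 1) (A $ 1 $ 2) (A $ 2 $ 1) (A $ 2 $ 2)"
  by (simp add: vec_eq_iff forall_2)

lemma mat2_eq_iff: "mat2 a b c d = mat2 a' b' c' d' \<longleftrightarrow> a = a' \<and> b = b' \<and> c = c' \<and> d = d'"
  by (metis mat2_nth)

lemma mat2_mult:
  fixes a b c d :: "'a::semiring_1"
  shows "mat2 a b c d ** mat2 e f g h = mat2 (a*e + b*g) (a*f + b*h) (c*e + d*g) (c*f + d*h)"
  by (simp add: vec_eq_iff forall_2 matrix_matrix_mult_def sum_2)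

lemma mat_1_eq_mat2: "mat 1 = mat2 (1::'a::zero_neq_one) 0 0 1"
  by (simp add: vec_eq_iff forall_2 mat_def)

lemma diag2_eq_mat2: "diag2 a b = mat2 a 0 0 b"
  by (simp add: vec_eq_iff forall_2 diag2_def)

lemma tendsto_mat2 [tendsto_intros]:
  assumes "(a \<longlongrightarrow> a0) F" "(b \<longlongrightarrow> b0) F" "(c \<longlongrightarrow> c0) F" "(d \<longlongrightarrow> d0) F"
  shows "((\<lambda>x. mat2 (a x) (b x) (c x) (d x)) \<longlongrightarrow> mat2 a0 b0 c0 d0) F"
  using assms by (intro vec_tendstoI) (simp add: mat2_def)

lemma matrix_inv_mat2:
  fixes p q r u :: "'a::field"
  assumes "p * r - u * q \<noteq> 0"
  shows "matrix_inv (mat2 p u q r) =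
    mat2 (r / (p * r - u * q)) (- u / (p * r - u * q)) (- q / (p * r - u * q)) (p / (p * r - u * q))"
  using assms by (intro matrix_inv_unique)
    (simp add: mat2_mult mat_1_eq_mat2 mat2_eq_iff add_divide_distrib[symmetric]
      diff_divide_distrib[symmetric] times_divide_eq_right mult.commute)

lemma matrix_inv_diag2:
  assumes "a \<noteq> 0" "b \<noteq> 0"
  shows "matrix_inv (diag2 a b) = diag2 (1 / a) (1 / b)"
  using assms by (intro matrix_inv_unique) (simp add: diag2_eq_mat2 mat2_mult mat_1_eq_mat2)

lemma invertible_diag2: "a \<noteq> 0 \<Longrightarrow> b \<noteq> 0 \<Longrightarrow> invertible (diag2 a b)"
  unfolding invertible_right_inverse
  by (intro exI[of _ "diag2 (1 / a) (1 / b)"]) (simp add: diag2_eq_mat2 mat2_mult mat_1_eq_mat2)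

lemma diag2_mult_commute: "diag2 a b ** diag2 c d = diag2 c d ** diag2 a b"
  by (simp add: diag2_eq_mat2 mat2_mult mult.commute)

lemma diag2_mat2_diag2:
  "diag2 a b ** mat2 x y z t ** diag2 c d = mat2 (a * x * c) (a * y * d) (b * z * c) (b * t * d)"
  by (simp add: diag2_eq_mat2 mat2_mult)

lemma diag2_commutator_factorization:
  fixes a1 a2 b1 b2 p q r u :: complex
  defines "\<nu>\<^sub>0 \<equiv> a2 / a1" and "\<nu>\<^sub>1 \<equiv> b1 / b2" and "\<delta> \<equiv> p * r - u * q"
    and "C \<equiv> mat2 p u q r"
  assumes nonzero: "a1 \<noteq> 0" "a2 \<noteq> 0" "b1 \<noteq> 0" "b2 \<noteq> 0" and "\<delta> \<noteq> 0"
  shows "C ** matrix_inv (diag2 b1 b2) ** matrix_inv C ** diag2 a1 a2 ** C ** diag2 b1 b2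
           ** matrix_inv C ** matrix_inv (diag2 a1 a2)
       = C ** mat2 ((p * r - \<nu>\<^sub>0 * u * q) / \<delta>) (r * (1 - \<nu>\<^sub>0) * (u / (\<nu>\<^sub>0 * \<nu>\<^sub>1)) / \<delta>)
                   ((\<nu>\<^sub>0 - 1) * \<nu>\<^sub>1 * p * q / \<delta>) ((p * r - u / \<nu>\<^sub>0 * q) / \<delta>)
           ** mat2 (r / \<delta>) (- (u / \<nu>\<^sub>0) / \<delta>) (- (\<nu>\<^sub>0 * q) / \<delta>) (p / \<delta>)"
proof -
  have inv_C: "matrix_inv C = mat2 (r / \<delta>) (- u / \<delta>) (- q / \<delta>) (p / \<delta>)"
    using \<open>\<delta> \<noteq> 0\<close> unfolding \<delta>_def C_def by (rule matrix_inv_mat2)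
  have inv_diag2: "matrix_inv (diag2 a1 a2) = diag2 (1 / a1) (1 / a2)"
    "matrix_inv (diag2 b1 b2) = diag2 (1 / b1) (1 / b2)"
    using nonzero by (simp_all add: matrix_inv_diag2)
  have "matrix_inv (diag2 b1 b2) ** (matrix_inv C ** diag2 a1 a2 ** C ** matrix_inv (diag2 a1 a2))
          ** diag2 b1 b2
      = mat2 ((p * r - \<nu>\<^sub>0 * u * q) / \<delta>) (r * (1 - \<nu>\<^sub>0) * (u / (\<nu>\<^sub>0 * \<nu>\<^sub>1)) / \<delta>)
             ((\<nu>\<^sub>0 - 1) * \<nu>\<^sub>1 * p * q / \<delta>) ((p * r - u / \<nu>\<^sub>0 * q) / \<delta>)"
    using nonzero \<open>\<delta> \<noteq> 0\<close> unfolding inv_C inv_diag2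
    by (simp add: C_def diag2_eq_mat2 mat2_mult mat2_eq_iff \<nu>\<^sub>0_def \<nu>\<^sub>1_def field_simps)
  moreover have "diag2 a1 a2 ** matrix_inv C ** matrix_inv (diag2 a1 a2)
      = mat2 (r / \<delta>) (- (u / \<nu>\<^sub>0) / \<delta>) (- (\<nu>\<^sub>0 * q) / \<delta>) (p / \<delta>)"
    using nonzero \<open>\<delta> \<noteq> 0\<close> unfolding inv_C inv_diag2
    by (simp add: diag2_mat2_diag2 mat2_eq_iff \<nu>\<^sub>0_def field_simps)
  ultimately show ?thesis
    using nonzero by (simp add: commutator_regroup invertible_diag2 diag2_mult_commute)
qed

lemma tendsto_diag2_commutator:
  fixes C :: "'x \<Rightarrow> complex^2^2" and a1 a2 b1 b2 :: "'x \<Rightarrow> complex"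
  assumes nonzero: "\<forall>\<^sub>F x in F. a1 x \<noteq> 0 \<and> a2 x \<noteq> 0 \<and> b1 x \<noteq> 0 \<and> b2 x \<noteq> 0"
    and C_lim: "(C \<longlongrightarrow> C0) F" and C0: "unipotent_lower C0"
    and \<nu>\<^sub>0_lim: "((\<lambda>x. a2 x / a1 x) \<longlongrightarrow> 0) F"
    and \<nu>\<^sub>1_lim: "((\<lambda>x. b1 x / b2 x) \<longlongrightarrow> 0) F"
    and u_small: "(\<lambda>x. C x $ 1 $ 2) \<in> o[F](\<lambda>x. a2 x / a1 x * (b1 x / b2 x))"
  shows "((\<lambda>x. C x ** matrix_inv (diag2 (b1 x) (b2 x)) ** matrix_inv (C x) ** diag2 (a1 x) (a2 x)
            ** C x ** diag2 (b1 x) (b2 x) ** matrix_inv (C x) ** matrix_inv (diag2 (a1 x) (a2 x)))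
          \<longlongrightarrow> C0) F"
proof -
  define p q r u where "p x = C x $ 1 $ 1" and "q x = C x $ 2 $ 1"
    and "r x = C x $ 2 $ 2" and "u x = C x $ 1 $ 2" for x
  define \<nu>\<^sub>0 \<nu>\<^sub>1 \<delta> where "\<nu>\<^sub>0 x = a2 x / a1 x" and "\<nu>\<^sub>1 x = b1 x / b2 x"
    and "\<delta> x = p x * r x - u x * q x" for x
  define v w where "v x = u x / \<nu>\<^sub>0 x" and "w x = u x / (\<nu>\<^sub>0 x * \<nu>\<^sub>1 x)" for x
  define Y where "Y x = mat2 ((p x * r x - \<nu>\<^sub>0 x * u x * q x) / \<delta> x) (r x * (1 - \<nu>\<^sub>0 x) * w x / \<delta> x)
    ((\<nu>\<^sub>0 x - 1) * \<nu>\<^sub>1 x * p x * q x / \<delta> x) ((p x * r x - v x * q x) / \<delta> x)" for x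
  define K where "K x = mat2 (r x / \<delta> x) (- v x / \<delta> x) (- (\<nu>\<^sub>0 x * q x) / \<delta> x) (p x / \<delta> x)" for x
  have entry_lim: "(p \<longlongrightarrow> 1) F" "(q \<longlongrightarrow> C0 $ 2 $ 1) F" "(r \<longlongrightarrow> 1) F" "(u \<longlongrightarrow> 0) F"
    using C0 unfolding p_def[abs_def] q_def[abs_def] r_def[abs_def] u_def[abs_def] unipotent_lower_def
    by (auto intro!: tendsto_eq_rhs[OF tendsto_vec_nth[OF tendsto_vec_nth[OF C_lim]]])
  have \<nu>_lim: "(\<nu>\<^sub>0 \<longlongrightarrow> 0) F" "(\<nu>\<^sub>1 \<longlongrightarrow> 0) F"
    using \<nu>\<^sub>0_lim \<nu>\<^sub>1_lim unfolding \<nu>\<^sub>0_def[abs_def] \<nu>\<^sub>1_def[abs_def] .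
  have w_lim: "(w \<longlongrightarrow> 0) F"
    using smalloD_tendsto[OF u_small] unfolding w_def[abs_def] u_def \<nu>\<^sub>0_def \<nu>\<^sub>1_def .
  have "\<forall>\<^sub>F x in F. w x * \<nu>\<^sub>1 x = v x"
    using nonzero by eventually_elim (simp add: v_def w_def \<nu>\<^sub>1_def)
  then have v_lim: "(v \<longlongrightarrow> 0) F"
    using tendsto_mult[OF w_lim \<nu>_lim(2)] by (simp add: Lim_transform_eventually)
  have \<delta>_lim: "(\<delta> \<longlongrightarrow> 1) F"
    unfolding \<delta>_def[abs_def] using entry_lim by (auto intro!: tendsto_eq_intros)
  have Y_lim: "(Y \<longlongrightarrow> mat 1) F" and K_lim: "(K \<longlongrightarrow> mat 1) F"
    unfolding Y_def[abs_def] K_def[abs_def] mat_1_eq_mat2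
    by (auto intro!: tendsto_mat2 tendsto_eq_intros entry_lim \<nu>_lim v_lim w_lim \<delta>_lim)
  have "((\<lambda>x. C x ** Y x ** K x) \<longlongrightarrow> C0) F"
    using tendsto_matrix_mult[OF tendsto_matrix_mult[OF C_lim Y_lim] K_lim] by simp
  moreover have "\<forall>\<^sub>F x in F. \<delta> x \<noteq> 0"
    using \<delta>_lim by (rule tendsto_imp_eventually_ne) simp
  then have "\<forall>\<^sub>F x in F. C x ** Y x ** K x = C x ** matrix_inv (diag2 (b1 x) (b2 x))
      ** matrix_inv (C x) ** diag2 (a1 x) (a2 x) ** C x ** diag2 (b1 x) (b2 x) ** matrix_inv (C x)
      ** matrix_inv (diag2 (a1 x) (a2 x))"
    using nonzero
  proof eventually_elim
    case (elim x)
    have "C x = mat2 (p x) (u x) (q x) (r x)"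
      unfolding p_def q_def r_def u_def by (rule mat2_entries)
    with elim show ?case
      unfolding Y_def K_def v_def w_def \<nu>\<^sub>0_def \<nu>\<^sub>1_def \<delta>_def
      by (simp add: diag2_commutator_factorization)
  qed
  ultimately show ?thesis
    by (simp add: Lim_transform_eventually)
qed

theorem lemma3p5:
  fixes M0 M1 P0 P1 C :: "real \<Rightarrow> complex^2^2"
    and l01 l02 l11 l12 :: "real \<Rightarrow> complex"
    and Q0 Q1 C0 :: "complex^2^2"
  assumes nz: "\<And>\<epsilon>. \<epsilon> > 0 \<Longrightarrow> l01 \<epsilon> \<noteq> 0 \<and> l02 \<epsilon> \<noteq> 0 \<and> l11 \<epsilon> \<noteq> 0 \<and> l12 \<epsilon> \<noteq> 0"
    and P0_inv: "\<And>\<epsilon>. \<epsilon> > 0 \<Longrightarrow> invertible (P0 \<epsilon>)"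
    and P1_inv: "\<And>\<epsilon>. \<epsilon> > 0 \<Longrightarrow> invertible (P1 \<epsilon>)"
    and M0_eig: "\<And>\<epsilon>. \<epsilon> > 0 \<Longrightarrow> M0 \<epsilon> = P0 \<epsilon> ** diag2 (l01 \<epsilon>) (l02 \<epsilon>) ** matrix_inv (P0 \<epsilon>)"
    and M1_eig: "\<And>\<epsilon>. \<epsilon> > 0 \<Longrightarrow> M1 \<epsilon> = P1 \<epsilon> ** diag2 (l11 \<epsilon>) (l12 \<epsilon>) ** matrix_inv (P1 \<epsilon>)"
    and C_def: "\<And>\<epsilon>. \<epsilon> > 0 \<Longrightarrow> C \<epsilon> = matrix_inv (P0 \<epsilon>) ** P1 \<epsilon>"
    and P0_lim: "(P0 \<longlongrightarrow> Q0) (at_right 0)" and Q0_inv: "invertible Q0"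
    and P1_lim: "(P1 \<longlongrightarrow> Q1) (at_right 0)" and Q1_inv: "invertible Q1"
    and C_lim: "(C \<longlongrightarrow> C0) (at_right 0)"
    and C0_unip: "unipotent_lower C0"
    and nu0: "((\<lambda>\<epsilon>. l02 \<epsilon> / l01 \<epsilon>) \<longlongrightarrow> 0) (at_right 0)"
    and nu1: "((\<lambda>\<epsilon>. l11 \<epsilon> / l12 \<epsilon>) \<longlongrightarrow> 0) (at_right 0)"
    and u_small: "(\<lambda>\<epsilon>. C \<epsilon> $ 1 $ 2) \<in> o[at_right 0](\<lambda>\<epsilon>. (l02 \<epsilon> / l01 \<epsilon>) * (l11 \<epsilon> / l12 \<epsilon>))"
  shows "((\<lambda>\<epsilon>. matrix_inv (P0 \<epsilon>) ** (matrix_inv (M1 \<epsilon>) ** M0 \<epsilon> ** M1 \<epsilon> ** matrix_inv (M0 \<epsilon>)) ** P0 \<epsilon>)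
           \<longlongrightarrow> C0) (at_right 0)"
proof -
  have nonzero: "\<forall>\<^sub>F \<epsilon> in at_right 0. l01 \<epsilon> \<noteq> 0 \<and> l02 \<epsilon> \<noteq> 0 \<and> l11 \<epsilon> \<noteq> 0 \<and> l12 \<epsilon> \<noteq> 0"
    using eventually_at_right_less nz by (rule eventually_mono)
  have "\<forall>\<^sub>F \<epsilon> in at_right 0.
      C \<epsilon> ** matrix_inv (diag2 (l11 \<epsilon>) (l12 \<epsilon>)) ** matrix_inv (C \<epsilon>) ** diag2 (l01 \<epsilon>) (l02 \<epsilon>)
        ** C \<epsilon> ** diag2 (l11 \<epsilon>) (l12 \<epsilon>) ** matrix_inv (C \<epsilon>) ** matrix_inv (diag2 (l01 \<epsilon>) (l02 \<epsilon>))
      = matrix_inv (P0 \<epsilon>) ** (matrix_inv (M1 \<epsilon>) ** M0 \<epsilon> ** M1 \<epsilon> ** matrix_inv (M0 \<epsilon>)) ** P0 \<epsilon>"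
    using eventually_at_right_less[of 0]
  proof eventually_elim
    case (elim \<epsilon>)
    have "invertible (diag2 (l01 \<epsilon>) (l02 \<epsilon>))" "invertible (diag2 (l11 \<epsilon>) (l12 \<epsilon>))"
      using nz[OF elim] by (simp_all add: invertible_diag2)
    with elim show ?case
      unfolding M0_eig[OF elim] M1_eig[OF elim] C_def[OF elim]
      by (intro commutator_in_eigenbasis[symmetric] P0_inv P1_inv)
  qed
  moreover have "((\<lambda>\<epsilon>. C \<epsilon> ** matrix_inv (diag2 (l11 \<epsilon>) (l12 \<epsilon>)) ** matrix_inv (C \<epsilon>)
      ** diag2 (l01 \<epsilon>) (l02 \<epsilon>) ** C \<epsilon> ** diag2 (l11 \<epsilon>) (l12 \<epsilon>) ** matrix_inv (C \<epsilon>)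
      ** matrix_inv (diag2 (l01 \<epsilon>) (l02 \<epsilon>))) \<longlongrightarrow> C0) (at_right 0)"
    using nonzero C_lim C0_unip nu0 nu1 u_small by (rule tendsto_diag2_commutator)
  ultimately show ?thesis
    by (rule Lim_transform_eventually[rotated])
qed

end
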